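(* Let $J_-,J_+\subset\mathbb Z$ be disjoint finite arithmetic progressions with the same common difference, $J=J_-\cup J_+$. For a generic twisted $J$-corrugated $n$-gon with corresponding operator $\mathcal D\in\mathrm{DO}_n(J)$, the Lax operator $\mathcal L(z):=\mathcal D_-(z)^{-1}\mathcal D_+(z)$ is a well-defined element of $\widetilde{\mathrm{GL}}_n/(\mathrm{Ad}\,\mathbb T\times\mathbb R^* )$, i.e. it does not depend, modulo conjugation by constant invertible diagonal matrices and the substitutions $z\mapsto tz$ ($t\in\mathbb R^*$), on the choice of $\mathcal D$ corresponding to the polygon nor on the representative of the projective equivalence class.
   Context: A scalar operator is a bi-infinite real sequence $a=(a_i)$ acting by $(aV)_i=a_iV_i$; $T$ is the left shift. An $n$-periodic difference operator is a finite sum $\sum_j a^{(j)}T^j$ with $n$-periodic coefficients; $\mathrm{DO}_n(J)$ consists of those of the form $\sum_{j\in J}a^{(j)}T^j$; for $\mathcal D=\sum_{j\in J}a^{(j)}T^j$ put $\mathcal D_\pm=\sum_{j\in J_\pm}a^{(j)}T^j$. $\mathcal D(z)$ is the matrix Laurent polynomial obtained by sending a scalar operator $a$ to $\mathrm{diag}(a_1,\dots,a_n)$ and $T$ to the $n\times n$ matrix with $1$'s at positions $(i,i+1)$ and $z$ at position $(n,1)$. $\widetilde{\mathrm{GL}}_n$ is the group of invertible matrix-valued rational functions of $z$. For $d=\max J-\min J-1$, a twisted $J$-corrugated $n$-gon is a sequence $v_i\in\mathbb{RP}^d$ with $v_{i+n}=M(v_i)$ ($M$ projective) such that for each $i$ the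 points $v_{i+j}$, $j\in J$, lie in a projective subspace of dimension $|J|-2$; $\mathcal D$ corresponds to it if $\mathcal DV=0$ for some lift $V_i\in\mathbb R^{d+1}$ of $v_i$. Such $\mathcal D$ is determined up to $\mathcal D\mapsto a\mathcal Db^{-1}$ with $a,b$ invertible $n$-quasiperiodic scalar operators with the same monodromy. *)

theory Defs
  imports Complex_Main "Jordan_Normal_Form.Gauss_Jordan_Elimination" "Jordan_Normal_Form.Determinant"
begin

(* Scalar operators: bi-infinite real sequences  int => real.
   A difference operator sum_{j in J} a^(j) T^j is represented by its support J
   together with the coefficient family  D :: int => int => real,  D j i = a^(j)_i.
   Its action: (D V)_i = sum_{j in J} D j i * V (i+j). *)

definition periodic_seq :: "nat \<Rightarrow> (int \<Rightarrow> real) \<Rightarrow> bool" where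
  "periodic_seq n a \<longleftrightarrow> (\<forall>i. a (i + int n) = a i)"

definition quasiperiodic_inv :: "nat \<Rightarrow> real \<Rightarrow> (int \<Rightarrow> real) \<Rightarrow> bool" where
  "quasiperiodic_inv n m a \<longleftrightarrow> (\<forall>i. a (i + int n) = m * a i) \<and> (\<forall>i. a i \<noteq> 0)"

definition DO :: "nat \<Rightarrow> int set \<Rightarrow> (int \<Rightarrow> int \<Rightarrow> real) \<Rightarrow> bool" where
  "DO n J D \<longleftrightarrow> (\<forall>j\<in>J. periodic_seq n (D j))"

(* the operator  a D b^{-1}  (coefficients: (a D b^{-1})^(j)_i = a_i a^(j)_i / b_(i+j)) *)
definition gauge :: "(int \<Rightarrow> real) \<Rightarrow> (int \<Rightarrow> int \<Rightarrow> real) \<Rightarrow> (int \<Rightarrow> real) \<Rightarrow> (int \<Rightarrow> int \<Rightarrow> real)" where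
  "gauge a D b = (\<lambda>j i. a i * D j i / b (i + j))"

definition arith_prog :: "int \<Rightarrow> int set \<Rightarrow> bool" where
  "arith_prog d P \<longleftrightarrow> d > 0 \<and> (\<exists>s l. l \<ge> 1 \<and> P = {s + int k * d | k. k < l})"

(* matrix inverse (zero matrix if not invertible) *)
definition minv :: "real mat \<Rightarrow> real mat" where
  "minv A = (case mat_inverse A of Some B \<Rightarrow> B | None \<Rightarrow> 0\<^sub>m (dim_row A) (dim_col A))"

(* T(z): 1's at positions (i,i+1), z at (n,1)  (0-based indices here) *)
definition Tmat :: "nat \<Rightarrow> real \<Rightarrow> real mat" where
  "Tmat n z = mat n n (\<lambda>(r,c). if r + 1 < n \<and> c = r + 1 then 1
                               else if r + 1 = n \<and> c = 0 then z else 0)"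

definition Tpow :: "nat \<Rightarrow> real \<Rightarrow> int \<Rightarrow> real mat" where
  "Tpow n z j = (if 0 \<le> j then Tmat n z ^\<^sub>m nat j else minv (Tmat n z) ^\<^sub>m nat (- j))"

definition opmat :: "nat \<Rightarrow> int set \<Rightarrow> (int \<Rightarrow> int \<Rightarrow> real) \<Rightarrow> real \<Rightarrow> real mat" where
  "opmat n J D z = mat n n (\<lambda>(r,c). \<Sum>j\<in>J. D j (int r + 1) * Tpow n z j $$ (r,c))"

definition Lax :: "nat \<Rightarrow> int set \<Rightarrow> int set \<Rightarrow> (int \<Rightarrow> int \<Rightarrow> real) \<Rightarrow> real \<Rightarrow> real mat" where
  "Lax n Jm Jp D z = minv (opmat n Jm D z) * opmat n Jp D z"

definition inv_diag :: "nat \<Rightarrow> real mat \<Rightarrow> bool" where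
  "inv_diag n C \<longleftrightarrow> C \<in> carrier_mat n n \<and> (\<forall>r<n. \<forall>c<n. r \<noteq> c \<longrightarrow> C $$ (r,c) = 0)
                    \<and> (\<forall>r<n. C $$ (r,r) \<noteq> 0)"

(* a matrix-valued rational function is invertible (in GL~_n) iff its determinant is
   not identically zero; equality of rational functions = equality off a finite set *)
definition generic_inv :: "(real \<Rightarrow> real mat) \<Rightarrow> bool" where
  "generic_inv F \<longleftrightarrow> (\<exists>z. det (F z) \<noteq> 0)"

end

theory Submission
  imports Defs
begin

text \<open>Write \<open>B\<^sub>s\<close> for the diagonal matrix \<open>diag(b\<^sub>s\<^sub>+\<^sub>1, \<dots>, b\<^sub>s\<^sub>+\<^sub>n)\<close> of a
  quasiperiodic sequence \<open>b\<close> with monodromy \<open>m\<close>. Then \<open>T(z) B\<^sub>s = B\<^sub>s\<^sub>+\<^sub>1 T(z/m)\<close>: the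
  monodromy factor picked up in the corner entry is absorbed by rescaling \<open>z\<close>. Iterating (and
  inverting) gives \<open>T(z)\<^sup>j B\<^sub>0 = B\<^sub>j T(z/m)\<^sup>j\<close> for all \<open>j \<in> \<int>\<close>, hence
  \<open>(a D b\<^sup>-\<^sup>1)(z) = A\<^sub>0 D(z/m) B\<^sub>0\<^sup>-\<^sup>1\<close> for every support \<open>J\<close>. Thus the gauge action multiplies
  \<open>D\<^sub>\<plusminus>(z)\<close> on the same sides by the same invertible diagonal matrices, and in
  \<open>L = D\<^sub>-\<^sup>-\<^sup>1 D\<^sub>+\<close> the factor \<open>A\<^sub>0\<close> cancels, leaving conjugation by \<open>B\<^sub>0\<close> and the
  substitution \<open>z \<mapsto> z/m\<close>.\<close>

lemma minv_carrier: "A \<in> carrier_mat n n \<Longrightarrow> minv A \<in> carrier_mat n n"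
  by (auto simp: minv_def dest: mat_inverse(2) split: option.split)

lemma minv_inverse:
  assumes A: "A \<in> carrier_mat n n" and det: "det A \<noteq> 0"
  shows "A * minv A = 1\<^sub>m n" "minv A * A = 1\<^sub>m n"
proof -
  obtain B where "mat_inverse A = Some B"
    using mat_inverse(1)[OF A] det_non_zero_imp_unit[OF A det, of "()"] by fastforce
  with mat_inverse(2)[OF A] show "A * minv A = 1\<^sub>m n" "minv A * A = 1\<^sub>m n"
    by (auto simp: minv_def)
qed

lemma minv_singular:
  assumes A: "A \<in> carrier_mat n n" and det: "det A = 0"
  shows "minv A = 0\<^sub>m n n"
proof (cases "mat_inverse A")
  case (Some B)
  with mat_inverse(2)[OF A] have "det A * det B = 1"
    using det_mult[OF A, of B] by auto
  with det show ?thesis by simp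
qed (use A in \<open>simp add: minv_def\<close>)

lemma minv_eqI:
  assumes A: "A \<in> carrier_mat n n" and B: "B \<in> carrier_mat n n" and AB: "A * B = 1\<^sub>m n"
  shows "minv A = B"
proof -
  have "det A * det B = 1" using det_mult[OF A B] AB by simp
  then have "det A \<noteq> 0" by auto
  then have "minv A = minv A * (A * B)" "minv A * A = 1\<^sub>m n"
    using AB minv_inverse[OF A] minv_carrier[OF A] by auto
  then show ?thesis
    using A B minv_carrier[OF A] by (simp add: assoc_mult_mat[symmetric])
qed

lemma det_nonzero_if_right_inverse:
  assumes "A \<in> carrier_mat n n" "B \<in> carrier_mat n n" "A * B = 1\<^sub>m n"
  shows "det A \<noteq> 0"
  using det_mult[OF assms(1,2)] assms(3) by auto

lemma minv_minv:
  assumes A: "A \<in> carrier_mat n n" and det: "det A \<noteq> 0"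
  shows "minv (minv A) = A"
  by (rule minv_eqI[OF minv_carrier[OF A] A minv_inverse(2)[OF A det]])

lemma minv_mult_conj:
  assumes P: "P \<in> carrier_mat n n" and M: "M \<in> carrier_mat n n" and Q: "Q \<in> carrier_mat n n"
    and dP: "det P \<noteq> 0" and dQ: "det Q \<noteq> 0"
  shows "minv (P * M * Q) = minv Q * minv M * minv P"
proof (cases "det M = 0")
  case True
  then have "det (P * M * Q) = 0" using P M Q by (simp add: det_mult)
  with True show ?thesis
    using P M Q minv_carrier[OF P] minv_carrier[OF Q] by (simp add: minv_singular)
next
  case False
  note inv = minv_inverse[OF P dP] minv_inverse[OF M False] minv_inverse[OF Q dQ]
  note car = minv_carrier[OF P] minv_carrier[OF M] minv_carrier[OF Q]
  have cancel: "X * (minv X * Y) = Y" if "X \<in> carrier_mat n n" "det X \<noteq> 0" "Y \<in> carrier_mat n n" for X Y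
    using that minv_inverse[OF that(1,2)] minv_carrier[OF that(1)]
    by (simp add: assoc_mult_mat[symmetric])
  have "P * M * Q * (minv Q * minv M * minv P) = P * (M * (Q * (minv Q * (minv M * minv P))))"
    using P M Q car by (simp add: assoc_mult_mat[of _ n n _ n _ n])
  also have "\<dots> = 1\<^sub>m n" using P M Q car inv dP dQ False by (simp add: cancel)
  finally show ?thesis using P M Q car by (intro minv_eqI) auto
qed

lemma minv_intertwine:
  assumes X: "X \<in> carrier_mat n n" and Y: "Y \<in> carrier_mat n n"
    and P: "P \<in> carrier_mat n n" and Q: "Q \<in> carrier_mat n n"
    and dP: "det P \<noteq> 0" and dQ: "det Q \<noteq> 0" and XP: "X * P = Q * Y"
  shows "minv X * Q = P * minv Y"
proof -
  have "X = X * (P * minv P)" using X P minv_inverse[OF P dP] by simp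
  also have "\<dots> = Q * Y * minv P"
    using X P minv_carrier[OF P] XP by (simp add: assoc_mult_mat[symmetric])
  finally have "minv X = P * minv Y * minv Q"
    using minv_mult_conj[OF Q Y minv_carrier[OF P] dQ] minv_minv[OF P dP]
      det_nonzero_if_right_inverse[OF minv_carrier[OF P] P minv_inverse(2)[OF P dP]]
    by simp
  then show ?thesis
    using P Q minv_carrier[OF Q] minv_carrier[OF Y] minv_inverse(2)[OF Q dQ]
    by (simp add: assoc_mult_mat[of _ n n _ n _ n])
qed

lemma pow_mat_intertwine:
  fixes P :: "int \<Rightarrow> 'a :: semiring_1 mat"
  assumes X: "X \<in> carrier_mat n n" and Y: "Y \<in> carrier_mat n n"
    and P: "\<And>s. P s \<in> carrier_mat n n" and XP: "\<And>s. X * P s = P (s + e) * Y"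
  shows "X ^\<^sub>m k * P s = P (s + int k * e) * Y ^\<^sub>m k"
proof (induction k arbitrary: s)
  case 0
  show ?case using X Y P[of s] by simp
next
  case (Suc k)
  have "X ^\<^sub>m Suc k * P s = X ^\<^sub>m k * (P (s + e) * Y)"
    using X P by (simp add: assoc_mult_mat[of _ n n _ n _ n] XP)
  also have "\<dots> = P (s + e + int k * e) * Y ^\<^sub>m k * Y"
    using X Y P Suc.IH by (simp add: assoc_mult_mat[of _ n n _ n _ n, symmetric])
  also have "\<dots> = P (s + int (Suc k) * e) * Y ^\<^sub>m Suc k"
    using Y P by (simp add: assoc_mult_mat[of _ n n _ n _ n] algebra_simps)
  finally show ?case .
qed

definition seq_diag :: "nat \<Rightarrow> (int \<Rightarrow> real) \<Rightarrow> int \<Rightarrow> real mat" where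
  "seq_diag n b s = mat_diag n (\<lambda>i. b (int i + 1 + s))"

lemma seq_diag_carrier [simp]: "seq_diag n b s \<in> carrier_mat n n"
  by (simp add: seq_diag_def)

lemma det_seq_diag_nonzero:
  assumes "\<forall>i. b i \<noteq> 0"
  shows "det (seq_diag n b s) \<noteq> 0"
proof (rule det_nonzero_if_right_inverse)
  show "seq_diag n b s * seq_diag n (\<lambda>i. 1 / b i) s = 1\<^sub>m n"
    using assms by (simp add: seq_diag_def)
qed simp_all

lemma Tmat_carrier [simp]: "Tmat n z \<in> carrier_mat n n"
  by (simp add: Tmat_def)

lemma Tmat_seq_diag:
  assumes q: "\<forall>i. b (i + int n) = m * b i" and m: "m \<noteq> 0"
  shows "Tmat n z * seq_diag n b s = seq_diag n b (s + 1) * Tmat n (z / m)"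
proof -
  have "Tmat n z * seq_diag n b s = mat n n (\<lambda>(i, j). Tmat n z $$ (i, j) * b (int j + 1 + s))"
    unfolding seq_diag_def by (rule mat_diag_mult_right) simp
  also have "\<dots> = mat n n (\<lambda>(i, j). b (int i + 1 + (s + 1)) * Tmat n (z / m) $$ (i, j))"
    using q[rule_format, of "1 + s"] m by (auto simp: Tmat_def algebra_simps intro!: eq_matI)
  also have "\<dots> = seq_diag n b (s + 1) * Tmat n (z / m)"
    unfolding seq_diag_def by (rule mat_diag_mult_left[symmetric]) simp
  finally show ?thesis .
qed

lemma Tpow_carrier [simp]: "Tpow n z j \<in> carrier_mat n n"
  by (simp add: Tpow_def minv_carrier)

lemma Tpow_seq_diag:
  assumes q: "\<forall>i. b (i + int n) = m * b i" and m: "m \<noteq> 0" and nz: "\<forall>i. b i \<noteq> 0"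
  shows "Tpow n z j * seq_diag n b s = seq_diag n b (s + j) * Tpow n (z / m) j"
proof (cases "0 \<le> j")
  case True
  then show ?thesis
    using pow_mat_intertwine[of "Tmat n z" n "Tmat n (z / m)" "seq_diag n b" 1 "nat j" s]
      Tmat_seq_diag[OF q m] by (simp add: Tpow_def)
next
  case False
  \<comment> \<open>No case split on \<open>z = 0\<close>: this also holds for the junk value \<open>minv (Tmat n 0) = 0\<close>.\<close>
  have "minv (Tmat n z) * seq_diag n b s = seq_diag n b (s + - 1) * minv (Tmat n (z / m))" for s
    using minv_intertwine[OF Tmat_carrier Tmat_carrier seq_diag_carrier seq_diag_carrier
        det_seq_diag_nonzero[OF nz] det_seq_diag_nonzero[OF nz] Tmat_seq_diag[OF q m, of z "s - 1"]]
    by simp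
  then show ?thesis
    using False pow_mat_intertwine[of "minv (Tmat n z)" n "minv (Tmat n (z / m))" "seq_diag n b"
        "- 1" "nat (- j)" s]
    by (simp add: Tpow_def minv_carrier)
qed

lemma opmat_carrier [simp]: "opmat n J D z \<in> carrier_mat n n"
  by (simp add: opmat_def)

lemma opmat_gauge_intertwine:
  assumes q: "\<forall>i. b (i + int n) = m * b i" and m: "m \<noteq> 0" and nz: "\<forall>i. b i \<noteq> 0"
  shows "opmat n J (gauge a D b) z * seq_diag n b 0 = seq_diag n a 0 * opmat n J D (z / m)"
proof (rule eq_matI)
  fix r c assume "r < dim_row (seq_diag n a 0 * opmat n J D (z / m))"
    "c < dim_col (seq_diag n a 0 * opmat n J D (z / m))"
  then have r: "r < n" and c: "c < n" by (auto simp: seq_diag_def mat_diag_def opmat_def)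
  have T: "Tpow n z j $$ (r, c) * b (int c + 1) = b (int r + 1 + j) * Tpow n (z / m) j $$ (r, c)" for j
    using arg_cong[OF Tpow_seq_diag[OF q m nz, of z j 0], of "\<lambda>M. M $$ (r, c)"] r c
    by (simp add: seq_diag_def mat_diag_mult_left[OF Tpow_carrier] mat_diag_mult_right[OF Tpow_carrier])
  have "gauge a D b j (int r + 1) * Tpow n z j $$ (r, c) * b (int c + 1)
      = a (int r + 1) * D j (int r + 1) * (Tpow n z j $$ (r, c) * b (int c + 1)) / b (int r + 1 + j)"
    for j by (simp add: gauge_def)
  then have "gauge a D b j (int r + 1) * Tpow n z j $$ (r, c) * b (int c + 1)
      = a (int r + 1) * (D j (int r + 1) * Tpow n (z / m) j $$ (r, c))" for j
    unfolding T using nz by simp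
  then show "(opmat n J (gauge a D b) z * seq_diag n b 0) $$ (r, c)
      = (seq_diag n a 0 * opmat n J D (z / m)) $$ (r, c)"
    using r c
    by (simp add: seq_diag_def mat_diag_mult_left[OF opmat_carrier] mat_diag_mult_right[OF opmat_carrier])
      (simp add: opmat_def sum_distrib_left sum_distrib_right)
qed (auto simp: seq_diag_def mat_diag_def opmat_def)

lemma Lax_gauge:
  assumes q: "\<forall>i. b (i + int n) = m * b i" and m: "m \<noteq> 0"
    and anz: "\<forall>i. a i \<noteq> 0" and bnz: "\<forall>i. b i \<noteq> 0"
  shows "Lax n Jm Jp (gauge a D b) z
    = seq_diag n b 0 * Lax n Jm Jp D (z / m) * minv (seq_diag n b 0)"
proof -
  let ?A = "seq_diag n a 0" and ?B = "seq_diag n b 0"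
  note dA = det_seq_diag_nonzero[OF anz] and dB = det_seq_diag_nonzero[OF bnz]
  have minus: "minv (opmat n Jm (gauge a D b) z) * ?A = ?B * minv (opmat n Jm D (z / m))"
    by (rule minv_intertwine[OF opmat_carrier opmat_carrier seq_diag_carrier seq_diag_carrier dB dA
          opmat_gauge_intertwine[OF q m bnz]])
  have "opmat n Jp (gauge a D b) z = opmat n Jp (gauge a D b) z * (?B * minv ?B)"
    using minv_inverse(1)[OF seq_diag_carrier dB] right_mult_one_mat[OF opmat_carrier] by simp
  also have "\<dots> = ?A * opmat n Jp D (z / m) * minv ?B"
    using opmat_gauge_intertwine[OF q m bnz, of Jp a D z] minv_carrier[OF seq_diag_carrier]
    by (simp add: assoc_mult_mat[of _ n n _ n _ n, symmetric])
  finally have plus: "opmat n Jp (gauge a D b) z = ?A * opmat n Jp D (z / m) * minv ?B" .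
  note car = minv_carrier[OF opmat_carrier] minv_carrier[OF seq_diag_carrier]
    mult_carrier_mat[OF seq_diag_carrier opmat_carrier]
    mult_carrier_mat[OF minv_carrier[OF opmat_carrier] opmat_carrier]
  have "Lax n Jm Jp (gauge a D b) z
      = minv (opmat n Jm (gauge a D b) z) * ?A * opmat n Jp D (z / m) * minv ?B"
    unfolding Lax_def plus using car by (simp add: assoc_mult_mat[of _ n n _ n _ n])
  also have "\<dots> = ?B * Lax n Jm Jp D (z / m) * minv ?B"
    unfolding minus Lax_def using car by (simp add: assoc_mult_mat[of _ n n _ n _ n])
  finally show ?thesis .
qed

lemma generic_inv_gauge:
  assumes q: "\<forall>i. b (i + int n) = m * b i" and m: "m \<noteq> 0"
    and anz: "\<forall>i. a i \<noteq> 0" and bnz: "\<forall>i. b i \<noteq> 0" and D: "generic_inv (opmat n J D)"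
  shows "generic_inv (opmat n J (gauge a D b))"
proof -
  obtain z where z: "det (opmat n J D z) \<noteq> 0" using D by (auto simp: generic_inv_def)
  have "det (opmat n J (gauge a D b) (m * z)) * det (seq_diag n b 0)
      = det (seq_diag n a 0) * det (opmat n J D z)"
    using arg_cong[OF opmat_gauge_intertwine[OF q m bnz, of J a D "m * z"], of det] m
    by (simp add: det_mult[OF opmat_carrier seq_diag_carrier] det_mult[OF seq_diag_carrier opmat_carrier])
  then have "det (opmat n J (gauge a D b) (m * z)) \<noteq> 0"
    using z det_seq_diag_nonzero[OF anz] by auto
  then show ?thesis by (auto simp: generic_inv_def)
qed

lemma DO_gauge:
  assumes "DO n J D" and "quasiperiodic_inv n m a" and "quasiperiodic_inv n m b"
  shows "DO n J (gauge a D b)"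
proof -
  have "gauge a D b j (i + int n) = gauge a D b j i" if "j \<in> J" for i j
  proof -
    have "m \<noteq> 0" using assms(2) by (metis quasiperiodic_inv_def mult_zero_left)
    moreover have "b (i + int n + j) = m * b (i + j)"
      using assms(3) by (metis quasiperiodic_inv_def add.commute add.left_commute)
    ultimately show ?thesis
      using that assms by (simp add: gauge_def DO_def periodic_seq_def quasiperiodic_inv_def)
  qed
  then show ?thesis by (simp add: DO_def periodic_seq_def)
qed

lemma inv_diag_seq_diag: "\<forall>i. b i \<noteq> 0 \<Longrightarrow> inv_diag n (seq_diag n b s)"
  by (simp add: inv_diag_def seq_diag_def mat_diag_def)

theorem mainTheorem7:
  fixes n :: nat and d :: int and Jm Jp :: "int set"
    and D :: "int \<Rightarrow> int \<Rightarrow> real" and a b :: "int \<Rightarrow> real" and m :: real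
  assumes "n \<ge> 1"
    and "arith_prog d Jm" and "arith_prog d Jp" and "Jm \<inter> Jp = {}"
    and "DO n (Jm \<union> Jp) D"
    and "generic_inv (opmat n Jm D)" and "generic_inv (opmat n Jp D)"
    and "quasiperiodic_inv n m a" and "quasiperiodic_inv n m b"
  shows "DO n (Jm \<union> Jp) (gauge a D b)
    \<and> generic_inv (opmat n Jm (gauge a D b)) \<and> generic_inv (opmat n Jp (gauge a D b))
    \<and> (\<exists>C t. inv_diag n C \<and> t \<noteq> 0 \<and>
         finite {z. Lax n Jm Jp (gauge a D b) z \<noteq> C * Lax n Jm Jp D (t * z) * minv C})"
proof -
  have q: "\<forall>i. b (i + int n) = m * b i" and anz: "\<forall>i. a i \<noteq> 0" and bnz: "\<forall>i. b i \<noteq> 0"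
    using assms(8,9) by (auto simp: quasiperiodic_inv_def)
  have m: "m \<noteq> 0" using q bnz by (metis mult_zero_left)
  note gi = generic_inv_gauge[OF q m anz bnz]
  have "Lax n Jm Jp (gauge a D b) z = seq_diag n b 0 * Lax n Jm Jp D (1 / m * z) * minv (seq_diag n b 0)"
    for z using Lax_gauge[OF q m anz bnz] by simp
  then show ?thesis
    using DO_gauge[OF assms(5,8,9)] gi[OF assms(6)] gi[OF assms(7)] inv_diag_seq_diag[OF bnz] m
    by (intro conjI exI[of _ "seq_diag n b 0"] exI[of _ "1 / m"]) auto
qed

end
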